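(* Let $\Omega$ be the shift-orbit closure of a Sturmian word, with characteristic word $\tilde\omega$, and let $\omega,\omega'\in\Omega$ be distinct with $T^{n_0}(\omega)=T^{n_0}(\omega')=\tilde\omega$ for some $n_0\ge1$. Then for every factor $u$ of elements of $\Omega$ and every non-principal ultrafilter $p\in\beta\mathbb N$, $\omega|_u\in p$ if and only if $\omega'|_u\in p$. In particular $p^*(\omega)=p^*(\omega')$.
   Context: A Sturmian word is an infinite word over $\{0,1\}$ having exactly $k+1$ distinct factors of length $k$ for every $k\ge0$. $T$ is the shift, $\Omega$ the shift-orbit closure; $\tilde\omega$ is the unique element of $\Omega$ all of whose prefixes $v$ are left special ($0v$, $1v$ both factors). $\omega|_u=\{n\in\mathbb N:\omega_n\cdots\omega_{n+|u|-1}=u\}$. $\beta\mathbb N$ is the set of ultrafilters on $\mathbb N$; for $p\in\beta\mathbb N$, $p^*(\omega)$ is the unique infinite word such that a finite word $u$ is a prefix of $p^*(\omega)$ iff $\omega|_u\in p$. *)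

theory Defs
  imports Main
begin

text \<open>Infinite words over the alphabet {0,1} are functions nat => nat (with values in {0,1});
finite words are lists of naturals.\<close>

definition factor_of :: "(nat \<Rightarrow> nat) \<Rightarrow> nat list \<Rightarrow> bool" where
  "factor_of w u \<longleftrightarrow> (\<exists>i. u = map w [i..<i + length u])"

definition factors_len :: "(nat \<Rightarrow> nat) \<Rightarrow> nat \<Rightarrow> nat list set" where
  "factors_len w k = {u. length u = k \<and> factor_of w u}"

definition sturmian :: "(nat \<Rightarrow> nat) \<Rightarrow> bool" where
  "sturmian w \<longleftrightarrow> range w \<subseteq> {0, 1} \<and> (\<forall>k. card (factors_len w k) = k + 1)"

definition shift :: "(nat \<Rightarrow> nat) \<Rightarrow> (nat \<Rightarrow> nat)" where
  "shift w = (\<lambda>n. w (Suc n))"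

text \<open>Closure of the shift orbit in the product topology (cylinder sets as basis).\<close>
definition orbit_closure :: "(nat \<Rightarrow> nat) \<Rightarrow> (nat \<Rightarrow> nat) set" where
  "orbit_closure w0 = {x. \<forall>n. \<exists>k. \<forall>i<n. x i = (shift ^^ k) w0 i}"

definition prefix_of_len :: "(nat \<Rightarrow> nat) \<Rightarrow> nat \<Rightarrow> nat list" where
  "prefix_of_len x n = map x [0..<n]"

definition left_special :: "(nat \<Rightarrow> nat) set \<Rightarrow> nat list \<Rightarrow> bool" where
  "left_special \<Omega> v \<longleftrightarrow> (\<exists>x\<in>\<Omega>. factor_of x (0 # v)) \<and> (\<exists>x\<in>\<Omega>. factor_of x (1 # v))"

definition characteristic :: "(nat \<Rightarrow> nat) set \<Rightarrow> (nat \<Rightarrow> nat)" where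
  "characteristic \<Omega> = (THE x. x \<in> \<Omega> \<and> (\<forall>n. left_special \<Omega> (prefix_of_len x n)))"

definition occ :: "(nat \<Rightarrow> nat) \<Rightarrow> nat list \<Rightarrow> nat set" where
  "occ w u = {n. map w [n..<n + length u] = u}"

definition ultrafilter_nat :: "nat set set \<Rightarrow> bool" where
  "ultrafilter_nat p \<longleftrightarrow>
     UNIV \<in> p \<and> {} \<notin> p \<and>
     (\<forall>A B. A \<in> p \<and> A \<subseteq> B \<longrightarrow> B \<in> p) \<and>
     (\<forall>A B. A \<in> p \<and> B \<in> p \<longrightarrow> A \<inter> B \<in> p) \<and>
     (\<forall>A. A \<in> p \<or> - A \<in> p)"

definition nonprincipal :: "nat set set \<Rightarrow> bool" where
  "nonprincipal p \<longleftrightarrow> (\<forall>n. {n} \<notin> p)"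

definition pstar :: "nat set set \<Rightarrow> (nat \<Rightarrow> nat) \<Rightarrow> (nat \<Rightarrow> nat)" where
  "pstar p w = (THE x. \<forall>u. prefix_of_len x (length u) = u \<longleftrightarrow> occ w u \<in> p)"

end

theory Submission
  imports Defs
begin

text \<open>\<omega> and \<omega>' share their tail after position n0, so for every word u their occurrence
  sets agree above n0. A nonprincipal ultrafilter contains every tail {n0..} and therefore cannot
  distinguish sets that differ only below n0. Since p^*(\<omega>) is determined by which occurrence
  sets lie in p, it follows that p^*(\<omega>) = p^*(\<omega>').\<close>

lemma funpow_shift_apply: "(shift ^^ n) w i = w (i + n)"
  by (induction n arbitrary: w i) (simp_all add: shift_def)

lemma ultrafilter_nat_atLeast:
  assumes "ultrafilter_nat p" "nonprincipal p"
  shows "{n..} \<in> p"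
proof (induction n)
  case 0
  then show ?case using assms(1) by (simp add: ultrafilter_nat_def)
next
  case (Suc n)
  have "- {n} \<in> p" using assms unfolding ultrafilter_nat_def nonprincipal_def by blast
  with Suc have "{n..} \<inter> - {n} \<in> p" using assms(1) unfolding ultrafilter_nat_def by blast
  moreover have "{n..} \<inter> - {n} = {Suc n..}" by auto
  ultimately show ?case by simp
qed

lemma ultrafilter_nat_mem_iff_eq_above:
  assumes "ultrafilter_nat p" "nonprincipal p"
    and "A \<inter> {n..} = B \<inter> {n..}"
  shows "A \<in> p \<longleftrightarrow> B \<in> p"
proof -
  have tail: "{n..} \<in> p" using assms(1,2) by (rule ultrafilter_nat_atLeast)
  have "C \<in> p \<longleftrightarrow> C \<inter> {n..} \<in> p" for C
    using assms(1) tail unfolding ultrafilter_nat_def by blast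
  then show ?thesis using assms(3) by metis
qed

lemma occ_inter_atLeast_eq:
  assumes "\<And>i. i \<ge> n \<Longrightarrow> w i = w' i"
  shows "occ w u \<inter> {n..} = occ w' u \<inter> {n..}"
proof -
  have "map w [m..<m + length u] = map w' [m..<m + length u]" if "m \<ge> n" for m
    using that assms by (intro map_cong) auto
  then show ?thesis unfolding occ_def by (auto simp del: map_eq_conv)
qed

theorem mainTheorem15:
  fixes w0 \<omega> \<omega>' :: "nat \<Rightarrow> nat" and n0 :: nat
  assumes "sturmian w0"
    and "\<omega> \<in> orbit_closure w0" and "\<omega>' \<in> orbit_closure w0" and "\<omega> \<noteq> \<omega>'"
    and "n0 \<ge> 1"
    and "(shift ^^ n0) \<omega> = characteristic (orbit_closure w0)"
    and "(shift ^^ n0) \<omega>' = characteristic (orbit_closure w0)"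
  shows "(\<forall>p u. ultrafilter_nat p \<and> nonprincipal p \<and> (\<exists>x\<in>orbit_closure w0. factor_of x u)
            \<longrightarrow> (occ \<omega> u \<in> p \<longleftrightarrow> occ \<omega>' u \<in> p))
         \<and> (\<forall>p. ultrafilter_nat p \<and> nonprincipal p \<longrightarrow> pstar p \<omega> = pstar p \<omega>')"
proof -
  have tails_agree: "\<omega> i = \<omega>' i" if "i \<ge> n0" for i
  proof -
    have "\<omega> i = (shift ^^ n0) \<omega> (i - n0)" using that by (simp add: funpow_shift_apply)
    also have "\<dots> = (shift ^^ n0) \<omega>' (i - n0)" using assms(6,7) by simp
    also have "\<dots> = \<omega>' i" using that by (simp add: funpow_shift_apply)
    finally show ?thesis .
  qed
  have occ_iff: "occ \<omega> u \<in> p \<longleftrightarrow> occ \<omega>' u \<in> p"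
    if "ultrafilter_nat p" "nonprincipal p" for p u
    using that occ_inter_atLeast_eq[OF tails_agree] by (rule ultrafilter_nat_mem_iff_eq_above)
  show ?thesis
  proof (intro conjI allI impI)
    fix p u
    assume "ultrafilter_nat p \<and> nonprincipal p \<and> (\<exists>x\<in>orbit_closure w0. factor_of x u)"
    then show "occ \<omega> u \<in> p \<longleftrightarrow> occ \<omega>' u \<in> p" using occ_iff by blast
  next
    fix p assume "ultrafilter_nat p \<and> nonprincipal p"
    then show "pstar p \<omega> = pstar p \<omega>'" unfolding pstar_def using occ_iff by simp
  qed
qed

end
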